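(* Let $\psi\in\mathcal L$ be well-formed, let $\tau$ be a trace, and let $\sigma=\mathsf{seq}_\psi(\tau)$. Then $\sigma\models\psi$ in the propositional sense if and only if $\tau\models\psi$.
   Context: Syntax. Fix a multi-sorted signature with a finite non-empty set $V$ of data variables, each $v\in V$ having a lookback variable $\overleftarrow v$. Terms are $t::=v\mid\overleftarrow v\mid f(t_1,\dots,t_k)$; atoms are $p(t_1,\dots,t_k)$. First-order formulas are $\phi::=\top\mid\bot\mid a\mid\neg a\mid\phi\wedge\phi\mid\phi\vee\phi$. Properties are $\psi::=\phi\mid\psi\wedge\psi\mid\psi\vee\psi\mid\mathsf X\psi\mid\mathsf X_{\mathsf w}\psi\mid\psi\mathsf U\psi\mid\psi\mathsf R\psi$, forming $\mathcal L$; $\mathit{foa}(\psi)$ is the set of atoms of $\psi$. Semantics. A trace is $\tau=(M,\langle\alpha_0,\dots,\alpha_{n-1}\rangle)$ with $M$ a structure and $\alpha_i$ assignments on $V$. A term is well-defined at $i$ if $0<i<n$, or $i=0$ and it has no lookback variable. $v$ evaluates to $\alpha_i(v)$ and $\overleftarrow v$ to $\alpha_{i-1}(v)$. - $\tau,i\models p(t_1,\dots,t_k)$ iff some $t_j$ is not well-defined at $i$, or the evaluated tuple is in $p^M$; $\tau,i\models\neg a$ iff $\tau,i\not\models a$. - $\wedge$ and $\vee$ are as usual. - $\mathsf X\psi$: $i<n-1$ and $\psi$ holds at $i+1$. - $\mathsf X_{\mathsf w}\psi$: $i=n-1$ or $\psi$ holds at $i+1$. - $\psi_1\mathsf U\psi_2$: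 some $j\in[i,n)$ has $\psi_2$, with $\psi_1$ on $[i,j)$. - $\psi_1\mathsf R\psi_2$: $\psi_2$ holds on $[i,n)$, or some $j\in[i,n)$ has $\psi_1$ with $\psi_2$ on $[i,j]$. $\tau\models\psi$ iff $\tau,0\models\psi$. A sequence of atom sets $\sigma=\langle A_0,\dots,A_{n-1}\rangle$ satisfies $\psi$ in the propositional sense if the same clauses hold when each atom $a$ is treated as a Boolean proposition true at instant $i$ iff $a\in A_i$. For assignments $\alpha,\alpha'$ on $V$, $\alpha\rhd\alpha'$ maps $\overleftarrow v\mapsto\alpha(v)$ and $v\mapsto\alpha'(v)$. Corresponding atom sequence. $\mathsf{seq}_\psi(\tau)=\langle A_0,\dots,A_{n-1}\rangle$ with: - $A_0=\{a\in\mathit{foa}(\psi)\mid a$ has no lookback variable and $M,\alpha_0\models a\}$; - $A_i=\{a\in\mathit{foa}(\psi)\mid M,\alpha_{i-1}\rhd\alpha_i\models a\}$ for $0<i<n$. Well-formedness. - $\mathit{last}$ is a dedicated proposition for the last instant. - $\mathsf{tnps}(\psi)=\{\psi\}$ for (negated) atoms and temporally-rooted $\psi$, and $\mathsf{tnps}(\psi_1\wedge\psi_2)=\mathsf{tnps}(\psi_1\vee\psi_2)=\mathsf{tnps}(\psi_1)\cup\mathsf{tnps}(\psi_2)$. - $\mathsf{xnf}$ fixes literals, $\top$, $\bot$ and $\mathsf X$/$\mathsf X_{\mathsf w}$-rooted properties, commutes with $\wedge$ and $\vee$, and satisfies $\mathsf{xnf}(\psi_1\mathsf U\psi_2)=\mathsf{xnf}(\psi_2)\vee(\mathsf{xnf}(\psi_1)\wedge\mathsf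 X(\psi_1\mathsf U\psi_2))$ and $\mathsf{xnf}(\psi_1\mathsf R\psi_2)=(\mathsf{xnf}(\psi_2)\vee\mathit{last})\wedge(\mathsf{xnf}(\psi_1)\vee\mathsf X_{\mathsf w}(\psi_1\mathsf R\psi_2))$. - $\psi$ is well-formed if no (negated) atom in $\mathsf{tnps}(\mathsf{xnf}(\psi))$ contains a lookback variable. *)

theory Defs
  imports Main
begin

text \<open>Variables occurring in terms: a data variable v or its lookback variable.\<close>
datatype 'v tvar = Cur 'v | Prev 'v

datatype ('f, 'v) trm = TV "'v tvar" | Fn 'f "('f, 'v) trm list"

datatype ('p, 'f, 'v) atom = Atom 'p "('f, 'v) trm list"

text \<open>Properties of the language L (first-order formulas are the temporal-free ones).\<close>
datatype ('p, 'f, 'v) ltl =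
    PTrue
  | PFalse
  | Lit "('p, 'f, 'v) atom"
  | NLit "('p, 'f, 'v) atom"
  | PAnd "('p, 'f, 'v) ltl" "('p, 'f, 'v) ltl"
  | POr "('p, 'f, 'v) ltl" "('p, 'f, 'v) ltl"
  | X "('p, 'f, 'v) ltl"
  | WX "('p, 'f, 'v) ltl"
  | U "('p, 'f, 'v) ltl" "('p, 'f, 'v) ltl"
  | R "('p, 'f, 'v) ltl" "('p, 'f, 'v) ltl"

fun trm_has_lb :: "('f, 'v) trm \<Rightarrow> bool" where
  "trm_has_lb (TV (Cur v)) = False"
| "trm_has_lb (TV (Prev v)) = True"
| "trm_has_lb (Fn f ts) = (\<exists>t\<in>set ts. trm_has_lb t)"

fun atom_has_lb :: "('p, 'f, 'v) atom \<Rightarrow> bool" where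
  "atom_has_lb (Atom p ts) = (\<exists>t\<in>set ts. trm_has_lb t)"

fun foa :: "('p, 'f, 'v) ltl \<Rightarrow> ('p, 'f, 'v) atom set" where
  "foa PTrue = {}"
| "foa PFalse = {}"
| "foa (Lit a) = {a}"
| "foa (NLit a) = {a}"
| "foa (PAnd a b) = foa a \<union> foa b"
| "foa (POr a b) = foa a \<union> foa b"
| "foa (X a) = foa a"
| "foa (WX a) = foa a"
| "foa (U a b) = foa a \<union> foa b"
| "foa (R a b) = foa a \<union> foa b"

text \<open>sat n L i \<psi>: satisfaction at instant i on a trace of length n,
  where L i a says whether atom a is true at instant i.
  Both the first-order and the propositional semantics are instances.\<close>
fun sat :: "nat \<Rightarrow> (nat \<Rightarrow> ('p, 'f, 'v) atom \<Rightarrow> bool) \<Rightarrow> nat \<Rightarrow> ('p, 'f, 'v) ltl \<Rightarrow> bool" where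
  "sat n L i PTrue = True"
| "sat n L i PFalse = False"
| "sat n L i (Lit a) = L i a"
| "sat n L i (NLit a) = (\<not> L i a)"
| "sat n L i (PAnd a b) = (sat n L i a \<and> sat n L i b)"
| "sat n L i (POr a b) = (sat n L i a \<or> sat n L i b)"
| "sat n L i (X a) = (i < n - 1 \<and> sat n L (i + 1) a)"
| "sat n L i (WX a) = (i = n - 1 \<or> sat n L (i + 1) a)"
| "sat n L i (U a b) =
     (\<exists>j. i \<le> j \<and> j < n \<and> sat n L j b \<and> (\<forall>k. i \<le> k \<and> k < j \<longrightarrow> sat n L k a))"
| "sat n L i (R a b) =
     ((\<forall>j. i \<le> j \<and> j < n \<longrightarrow> sat n L j b) \<or>
      (\<exists>j. i \<le> j \<and> j < n \<and> sat n L j a \<and> (\<forall>k. i \<le> k \<and> k \<le> j \<longrightarrow> sat n L k b)))"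

record ('f, 'p, 'd) fo_struct =
  fint :: "'f \<Rightarrow> 'd list \<Rightarrow> 'd"
  pint :: "'p \<Rightarrow> 'd list \<Rightarrow> bool"

fun eval :: "('f, 'p, 'd) fo_struct \<Rightarrow> ('v tvar \<Rightarrow> 'd) \<Rightarrow> ('f, 'v) trm \<Rightarrow> 'd" where
  "eval M \<beta> (TV x) = \<beta> x"
| "eval M \<beta> (Fn f ts) = fint M f (map (eval M \<beta>) ts)"

fun fo_atom_sat :: "('f, 'p, 'd) fo_struct \<Rightarrow> ('v tvar \<Rightarrow> 'd) \<Rightarrow> ('p, 'f, 'v) atom \<Rightarrow> bool" where
  "fo_atom_sat M \<beta> (Atom p ts) = pint M p (map (eval M \<beta>) ts)"

definition cur_only :: "('v \<Rightarrow> 'd) \<Rightarrow> ('v tvar \<Rightarrow> 'd)" where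
  "cur_only \<alpha> = (\<lambda>x. case x of Cur v \<Rightarrow> \<alpha> v | Prev v \<Rightarrow> undefined)"

definition rhd :: "('v \<Rightarrow> 'd) \<Rightarrow> ('v \<Rightarrow> 'd) \<Rightarrow> ('v tvar \<Rightarrow> 'd)" where
  "rhd \<alpha> \<alpha>' = (\<lambda>x. case x of Prev v \<Rightarrow> \<alpha> v | Cur v \<Rightarrow> \<alpha>' v)"

text \<open>A trace is a structure M together with the list of assignments.\<close>
definition trace_asg :: "('v \<Rightarrow> 'd) list \<Rightarrow> nat \<Rightarrow> ('v tvar \<Rightarrow> 'd)" where
  "trace_asg \<alpha>s i = (if i = 0 then cur_only (\<alpha>s ! 0) else rhd (\<alpha>s ! (i - 1)) (\<alpha>s ! i))"

definition well_defined :: "nat \<Rightarrow> nat \<Rightarrow> ('f, 'v) trm \<Rightarrow> bool" where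
  "well_defined n i t = ((0 < i \<and> i < n) \<or> (i = 0 \<and> \<not> trm_has_lb t))"

fun trace_atom :: "('f, 'p, 'd) fo_struct \<Rightarrow> ('v \<Rightarrow> 'd) list \<Rightarrow> nat \<Rightarrow> ('p, 'f, 'v) atom \<Rightarrow> bool" where
  "trace_atom M \<alpha>s i (Atom p ts) =
     ((\<exists>t\<in>set ts. \<not> well_defined (length \<alpha>s) i t)
      \<or> pint M p (map (eval M (trace_asg \<alpha>s i)) ts))"

definition trace_sat :: "('f, 'p, 'd) fo_struct \<Rightarrow> ('v \<Rightarrow> 'd) list \<Rightarrow> ('p, 'f, 'v) ltl \<Rightarrow> bool" where
  "trace_sat M \<alpha>s \<psi> = sat (length \<alpha>s) (trace_atom M \<alpha>s) 0 \<psi>"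

definition prop_sat :: "('p, 'f, 'v) atom set list \<Rightarrow> ('p, 'f, 'v) ltl \<Rightarrow> bool" where
  "prop_sat \<sigma> \<psi> = sat (length \<sigma>) (\<lambda>i a. a \<in> \<sigma> ! i) 0 \<psi>"

definition seq :: "('p, 'f, 'v) ltl \<Rightarrow> ('f, 'p, 'd) fo_struct \<Rightarrow> ('v \<Rightarrow> 'd) list \<Rightarrow> ('p, 'f, 'v) atom set list" where
  "seq \<psi> M \<alpha>s = map (\<lambda>i.
      if i = 0 then {a \<in> foa \<psi>. \<not> atom_has_lb a \<and> fo_atom_sat M (cur_only (\<alpha>s ! 0)) a}
      else {a \<in> foa \<psi>. fo_atom_sat M (rhd (\<alpha>s ! (i - 1)) (\<alpha>s ! i)) a})
    [0..<length \<alpha>s]"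

text \<open>Output of xnf: properties combined with \<and>, \<or>, and the dedicated proposition last.\<close>
datatype 'a xf = XLast | XP 'a | XAnd "'a xf" "'a xf" | XOr "'a xf" "'a xf"

fun tnps :: "('p, 'f, 'v) ltl \<Rightarrow> ('p, 'f, 'v) ltl set" where
  "tnps (PAnd a b) = tnps a \<union> tnps b"
| "tnps (POr a b) = tnps a \<union> tnps b"
| "tnps PTrue = {}"
| "tnps PFalse = {}"
| "tnps \<psi> = {\<psi>}"

fun tnps_x :: "('p, 'f, 'v) ltl xf \<Rightarrow> ('p, 'f, 'v) ltl set" where
  "tnps_x XLast = {}"
| "tnps_x (XP \<psi>) = tnps \<psi>"
| "tnps_x (XAnd a b) = tnps_x a \<union> tnps_x b"
| "tnps_x (XOr a b) = tnps_x a \<union> tnps_x b"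

fun xnf :: "('p, 'f, 'v) ltl \<Rightarrow> ('p, 'f, 'v) ltl xf" where
  "xnf PTrue = XP PTrue"
| "xnf PFalse = XP PFalse"
| "xnf (Lit a) = XP (Lit a)"
| "xnf (NLit a) = XP (NLit a)"
| "xnf (X a) = XP (X a)"
| "xnf (WX a) = XP (WX a)"
| "xnf (PAnd a b) = XAnd (xnf a) (xnf b)"
| "xnf (POr a b) = XOr (xnf a) (xnf b)"
| "xnf (U a b) = XOr (xnf b) (XAnd (xnf a) (XP (X (U a b))))"
| "xnf (R a b) = XAnd (XOr (xnf b) XLast) (XOr (xnf a) (XP (WX (R a b))))"

definition well_formed :: "('p, 'f, 'v) ltl \<Rightarrow> bool" where
  "well_formed \<psi> = (\<forall>\<chi>\<in>tnps_x (xnf \<psi>). \<forall>a. (\<chi> = Lit a \<or> \<chi> = NLit a) \<longrightarrow> \<not> atom_has_lb a)"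

end

(*
  The propositional labelling "a is in the i-th set of seq" and the first-order labelling
  trace_atom agree at every instant except on atoms with lookback variables at instant 0:
  seq omits them, while the trace semantics makes them vacuously true. Unfolding U and R
  once, as xnf does, shows that at instant 0 a property only inspects the literals of
  tnps (xnf psi) and defers everything else to later instants; well-formedness says exactly
  that none of those literals has a lookback variable.
*)
theory Submission
  imports Defs
begin

lemma sat_cong:
  assumes "\<And>j a. i \<le> j \<Longrightarrow> j < n \<Longrightarrow> a \<in> foa \<phi> \<Longrightarrow> L1 j a = L2 j a"
    and "i < n"
  shows "sat n L1 i \<phi> = sat n L2 i \<phi>"
  using assms
proof (induction \<phi> arbitrary: i)
  case (X \<phi>)
  then show ?case by (cases "i + 1 < n") auto
next
  case (WX \<phi>)
  then show ?case by (cases "i + 1 < n") auto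
next
  case (U \<phi> \<chi>)
  then have "\<And>k. i \<le> k \<Longrightarrow> k < n \<Longrightarrow> sat n L1 k \<phi> = sat n L2 k \<phi> \<and> sat n L1 k \<chi> = sat n L2 k \<chi>"
    by simp
  then show ?case by simp (meson le_less_trans less_imp_le)
next
  case (R \<phi> \<chi>)
  then have "\<And>k. i \<le> k \<Longrightarrow> k < n \<Longrightarrow> sat n L1 k \<phi> = sat n L2 k \<phi> \<and> sat n L1 k \<chi> = sat n L2 k \<chi>"
    by simp
  then show ?case by simp (meson le_less_trans)
qed auto

lemma sat_U_unfold:
  assumes "i < n"
  shows "sat n L i (U \<phi> \<chi>) \<longleftrightarrow> sat n L i \<chi> \<or> sat n L i \<phi> \<and> sat n L i (X (U \<phi> \<chi>))"
  using assms by (auto simp: le_eq_less_or_eq[of i] Suc_le_eq)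

lemma sat_R_unfold:
  assumes "i < n"
  shows "sat n L i (R \<phi> \<chi>) \<longleftrightarrow> sat n L i \<chi> \<and> (sat n L i \<phi> \<or> sat n L i (WX (R \<phi> \<chi>)))"
  using assms by (auto simp: le_eq_less_or_eq[of i] Suc_le_eq)

lemma well_formed_simps [simp]:
  "well_formed PTrue"
  "well_formed PFalse"
  "well_formed (Lit a) \<longleftrightarrow> \<not> atom_has_lb a"
  "well_formed (NLit a) \<longleftrightarrow> \<not> atom_has_lb a"
  "well_formed (X \<phi>)"
  "well_formed (WX \<phi>)"
  "well_formed (PAnd \<phi> \<chi>) \<longleftrightarrow> well_formed \<phi> \<and> well_formed \<chi>"
  "well_formed (POr \<phi> \<chi>) \<longleftrightarrow> well_formed \<phi> \<and> well_formed \<chi>"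
  "well_formed (U \<phi> \<chi>) \<longleftrightarrow> well_formed \<phi> \<and> well_formed \<chi>"
  "well_formed (R \<phi> \<chi>) \<longleftrightarrow> well_formed \<phi> \<and> well_formed \<chi>"
  by (auto simp: well_formed_def)

lemma sat_0_cong_if_well_formed:
  assumes "well_formed \<phi>" and "0 < n"
    and "\<And>j a. 0 < j \<Longrightarrow> j < n \<Longrightarrow> a \<in> foa \<phi> \<Longrightarrow> L1 j a = L2 j a"
    and "\<And>a. a \<in> foa \<phi> \<Longrightarrow> \<not> atom_has_lb a \<Longrightarrow> L1 0 a = L2 0 a"
  shows "sat n L1 0 \<phi> = sat n L2 0 \<phi>"
  using assms
proof (induction \<phi>)
  case (X \<phi>)
  then show ?case using sat_cong[of 1 n \<phi> L1 L2] by auto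
next
  case (WX \<phi>)
  then show ?case using sat_cong[of 1 n \<phi> L1 L2] by (cases "1 < n") auto
next
  case (U \<phi> \<chi>)
  have "sat n L1 0 (X (U \<phi> \<chi>)) = sat n L2 0 (X (U \<phi> \<chi>))"
    using U.prems sat_cong[of 1 n "U \<phi> \<chi>" L1 L2] by auto
  with U show ?case unfolding sat_U_unfold[OF \<open>0 < n\<close>] by simp
next
  case (R \<phi> \<chi>)
  have "sat n L1 0 (WX (R \<phi> \<chi>)) = sat n L2 0 (WX (R \<phi> \<chi>))"
    using R.prems sat_cong[of 1 n "R \<phi> \<chi>" L1 L2] by (cases "1 < n") auto
  with R show ?case unfolding sat_R_unfold[OF \<open>0 < n\<close>] by simp
qed auto

lemma length_seq [simp]: "length (seq \<psi> M \<alpha>s) = length \<alpha>s"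
  by (simp add: seq_def)

lemma seq_nth_iff_trace_atom:
  assumes "0 < j" and "j < length \<alpha>s" and "a \<in> foa \<psi>"
  shows "a \<in> seq \<psi> M \<alpha>s ! j \<longleftrightarrow> trace_atom M \<alpha>s j a"
  using assms by (cases a) (simp add: seq_def well_defined_def trace_asg_def)

lemma seq_nth_0_iff_trace_atom:
  assumes "\<alpha>s \<noteq> []" and "a \<in> foa \<psi>" and "\<not> atom_has_lb a"
  shows "a \<in> seq \<psi> M \<alpha>s ! 0 \<longleftrightarrow> trace_atom M \<alpha>s 0 a"
  using assms by (cases a) (simp add: seq_def well_defined_def trace_asg_def)

theorem lemma5:
  fixes \<psi> :: "('p, 'f, 'v :: finite) ltl"
    and M :: "('f, 'p, 'd) fo_struct"
    and \<alpha>s :: "('v \<Rightarrow> 'd) list"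
  assumes "well_formed \<psi>"
    and "\<alpha>s \<noteq> []"
  shows "prop_sat (seq \<psi> M \<alpha>s) \<psi> \<longleftrightarrow> trace_sat M \<alpha>s \<psi>"
  unfolding prop_sat_def trace_sat_def length_seq
  using assms by (intro sat_0_cong_if_well_formed)
    (simp_all add: seq_nth_iff_trace_atom seq_nth_0_iff_trace_atom)

end
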